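(* Let $k\ge 2$ be an integer. Every $k$-automatic sequence is strongly $k$-recursive.
   Context: A sequence $(f(n))_{n\ge0}$ is $k$-automatic if there is a deterministic finite automaton with output which, on input the base-$k$ representation of $n$, reaches a state whose output is $f(n)$. A sequence $(f(n))_{n\ge 0}$ is strongly $k$-recursive if there exist natural numbers $r<t$ such that for every $b$ with $0\le b<k^t$, the sequence $(f(k^t n+b))_{n\ge 0}$ is a (finite) linear combination, with constant coefficients, of the sequences $(f(k^r n+a))_{n\ge0}$ with $0\le a<k^r$. *)

theory Defs
  imports Main
begin

text \<open>Base-k digits of n, least significant digit first, no leading zeros
  (the representation of 0 is the empty word).\<close>
function digits_lsd :: "nat \<Rightarrow> nat \<Rightarrow> nat list" where
  "digits_lsd k n = (if k < 2 \<or> n = 0 then [] else n mod k # digits_lsd k (n div k))"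
  by auto
termination by (relation "measure snd") auto

definition base_rep :: "nat \<Rightarrow> nat \<Rightarrow> nat list" where
  "base_rep k n = rev (digits_lsd k n)"

definition k_automatic :: "nat \<Rightarrow> (nat \<Rightarrow> 'a) \<Rightarrow> bool" where
  "k_automatic k f \<longleftrightarrow>
     (\<exists>(Q :: nat set) q0 (delta :: nat \<Rightarrow> nat \<Rightarrow> nat) (out :: nat \<Rightarrow> 'a).
        finite Q \<and> q0 \<in> Q \<and> (\<forall>q\<in>Q. \<forall>d<k. delta q d \<in> Q) \<and>
        (\<forall>n. out (fold (\<lambda>d q. delta q d) (base_rep k n) q0) = f n))"

definition strongly_k_recursive :: "nat \<Rightarrow> (nat \<Rightarrow> 'a::comm_ring_1) \<Rightarrow> bool" where
  "strongly_k_recursive k f \<longleftrightarrow>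
     (\<exists>r t :: nat. r < t \<and>
        (\<forall>b < k ^ t. \<exists>c :: nat \<Rightarrow> 'a.
           \<forall>n. f (k ^ t * n + b) = (\<Sum>a < k ^ r. c a * f (k ^ r * n + a))))"

end

theory Submission
  imports Defs "HOL-Library.FuncSet"
begin

text \<open>The sequences \<open>n \<mapsto> f (k^e n + a)\<close> with \<open>a < k^e\<close> form the \<open>k\<close>-kernel of \<open>f\<close>.
  For an automatic \<open>f\<close> the base-\<open>k\<close> word of \<open>k^e n + a\<close> (\<open>n > 0\<close>) is that of \<open>n\<close>
  followed by the \<open>e\<close> low digits of \<open>a\<close>, so such a sequence is determined by its value at \<open>0\<close>
  and by the state-to-state map of reading those digits: the kernel is finite.
  Hence the kernel levels \<open>e = 0, 1, 2, \<dots>\<close> cannot all differ, and if level \<open>t\<close>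
  equals level \<open>r < t\<close>, every sequence of level \<open>t\<close> is one of level \<open>r\<close>, a linear
  combination with a single coefficient \<open>1\<close>.\<close>

declare digits_lsd.simps[simp del]

fun low_digits :: "nat \<Rightarrow> nat \<Rightarrow> nat \<Rightarrow> nat list" where
  "low_digits k 0 a = []"
| "low_digits k (Suc e) a = a mod k # low_digits k e (a div k)"

lemma low_digits_less: "k > 0 \<Longrightarrow> d \<in> set (low_digits k e a) \<Longrightarrow> d < k"
  by (induction e arbitrary: a) auto

lemma digits_lsd_less: "d \<in> set (digits_lsd k n) \<Longrightarrow> d < k"
proof (induction k n rule: digits_lsd.induct)
  case (1 k n)
  then show ?case
    by (subst (asm) digits_lsd.simps) (auto split: if_splits)
qed

lemma digits_lsd_power_mult_add:
  assumes "k \<ge> 2" "n > 0" "a < k ^ e"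
  shows "digits_lsd k (k ^ e * n + a) = low_digits k e a @ digits_lsd k n"
  using assms(3)
proof (induction e arbitrary: a)
  case 0
  then show ?case by simp
next
  case (Suc e)
  have "a div k < k ^ e"
    using Suc.prems assms(1) by (simp add: div_less_iff_less_mult mult.commute)
  then have IH: "digits_lsd k (k ^ e * n + a div k) = low_digits k e (a div k) @ digits_lsd k n"
    by (rule Suc.IH)
  have "(k ^ Suc e * n + a) mod k = a mod k"
    by (simp add: mult.assoc)
  moreover have "(k ^ Suc e * n + a) div k = k ^ e * n + a div k"
    using assms(1) by (simp add: mult.assoc)
  moreover have "k ^ Suc e * n + a \<noteq> 0"
    using assms(1,2) by simp
  ultimately show ?case
    using assms(1) IH by (subst digits_lsd.simps) simp
qed

lemma base_rep_power_mult_add: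
  assumes "k \<ge> 2" "n > 0" "a < k ^ e"
  shows "base_rep k (k ^ e * n + a) = base_rep k n @ rev (low_digits k e a)"
  using digits_lsd_power_mult_add[OF assms] by (simp add: base_rep_def)

lemma fold_transition_closed:
  assumes "\<forall>q\<in>Q. \<forall>d<k. delta q d \<in> Q" "\<forall>d\<in>set ds. d < k" "q \<in> Q"
  shows "fold (\<lambda>d q. delta q d) ds q \<in> Q"
  using assms by (induction ds arbitrary: q) auto

definition kernel_level :: "nat \<Rightarrow> (nat \<Rightarrow> 'a) \<Rightarrow> nat \<Rightarrow> (nat \<Rightarrow> 'a) set" where
  "kernel_level k f e = (\<lambda>a n. f (k ^ e * n + a)) ` {..<k ^ e}"

lemma finite_kernel_if_automatic:
  assumes "k \<ge> 2" "k_automatic k f"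
  shows "finite (\<Union>e. kernel_level k f e)"
proof -
  obtain Q q0 delta and out :: "nat \<Rightarrow> 'a" where
    "finite Q" and "q0 \<in> Q" and closed: "\<forall>q\<in>Q. \<forall>d<k. delta q d \<in> Q" and
    accepts: "\<And>n. out (fold (\<lambda>d q. delta q d) (base_rep k n) q0) = f n"
    using assms(2) unfolding k_automatic_def by blast
  define run where "run ds q = fold (\<lambda>d q. delta q d) ds q" for ds q
  define state where "state n = run (base_rep k n) q0" for n
  have state_in: "state n \<in> Q" for n
    unfolding state_def run_def base_rep_def
    by (rule fold_transition_closed[OF closed _ \<open>q0 \<in> Q\<close>]) (auto dest: digits_lsd_less)
  define seq where "seq = (\<lambda>(h, v) n. if n = 0 then v else out (h (state n)))"
  have "kernel_level k f e \<subseteq> seq ` ((Q \<rightarrow>\<^sub>E Q) \<times> out ` Q)" for e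
  proof
    fix s assume "s \<in> kernel_level k f e"
    then obtain a where a: "a < k ^ e" and s: "s = (\<lambda>n. f (k ^ e * n + a))"
      unfolding kernel_level_def by auto
    define h where "h = restrict (run (rev (low_digits k e a))) Q"
    have "h \<in> Q \<rightarrow>\<^sub>E Q"
      unfolding h_def run_def
      using fold_transition_closed[OF closed] low_digits_less[of k] assms(1) by auto
    moreover have "f a \<in> out ` Q"
      using accepts state_in unfolding state_def run_def by (metis image_eqI)
    moreover have "s = seq (h, f a)"
    proof
      fix n
      show "s n = seq (h, f a) n"
      proof (cases "n = 0")
        case True
        then show ?thesis by (simp add: s seq_def)
      next
        case False
        then have "state (k ^ e * n + a) = run (rev (low_digits k e a)) (state n)"
          using base_rep_power_mult_add[OF assms(1) _ a, of n] by (simp add: state_def run_def)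
        then show ?thesis
          using False state_in[of n] accepts[of "k ^ e * n + a"]
          by (simp add: s seq_def h_def state_def run_def)
      qed
    qed
    ultimately show "s \<in> seq ` ((Q \<rightarrow>\<^sub>E Q) \<times> out ` Q)" by blast
  qed
  moreover have "finite (seq ` ((Q \<rightarrow>\<^sub>E Q) \<times> out ` Q))"
    using \<open>finite Q\<close> by (intro finite_imageI finite_cartesian_product finite_PiE) auto
  ultimately show ?thesis
    by (meson UN_least finite_subset)
qed

lemma finite_Union_range_repeats:
  fixes S :: "nat \<Rightarrow> 'a set"
  assumes "finite (\<Union>(range S))"
  obtains r t where "r < t" "S r = S t"
proof -
  have "finite (range S)"
    by (rule finite_subset[of _ "Pow (\<Union>(range S))"]) (use assms in auto)
  then have "\<not> inj S"
    using finite_imageD[of S UNIV] by auto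
  then obtain x y where "x \<noteq> y" "S x = S y"
    unfolding inj_def by blast
  then show ?thesis
    using that by (metis linorder_neqE_nat)
qed

lemma strongly_k_recursiveI:
  fixes f :: "nat \<Rightarrow> 'a::comm_ring_1"
  assumes "r < t" "kernel_level k f t \<subseteq> kernel_level k f r"
  shows "strongly_k_recursive k f"
  unfolding strongly_k_recursive_def
proof (rule exI[of _ r], rule exI[of _ t], intro conjI allI impI)
  show "r < t" by fact
  fix b assume "b < k ^ t"
  then have "(\<lambda>n. f (k ^ t * n + b)) \<in> kernel_level k f r"
    using assms(2) unfolding kernel_level_def by auto
  then obtain a where a: "a < k ^ r" and eq: "\<And>n. f (k ^ t * n + b) = f (k ^ r * n + a)"
    unfolding kernel_level_def by (auto dest: fun_cong)
  have "\<forall>n. f (k ^ t * n + b) = (\<Sum>a'<k ^ r. (if a' = a then 1 else 0) * f (k ^ r * n + a'))"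
    using a eq by (simp add: if_distrib[of "\<lambda>x. x * _"] sum.delta cong: if_cong)
  then show "\<exists>c. \<forall>n. f (k ^ t * n + b) = (\<Sum>a<k ^ r. c a * f (k ^ r * n + a))"
    by (rule exI[of _ "\<lambda>a'. if a' = a then 1 else 0"])
qed

theorem theorem2:
  fixes k :: nat and f :: "nat \<Rightarrow> 'a::comm_ring_1"
  assumes "k \<ge> 2" and "k_automatic k f"
  shows "strongly_k_recursive k f"
proof -
  obtain r t where "r < t" "kernel_level k f r = kernel_level k f t"
    using finite_kernel_if_automatic[OF assms] by (rule finite_Union_range_repeats)
  then show ?thesis
    by (intro strongly_k_recursiveI[of r t]) auto
qed

end
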